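(* In the SSBM of the context, let $V^\perp\in\mathbb R^{n\times(n-k)}$ be any matrix whose columns form an orthonormal basis of the orthogonal complement of the column span of $\Theta$. Then $$\mathcal L_{sym}=\begin{bmatrix}\Theta&V^\perp\end{bmatrix}\begin{pmatrix}\bar C&0\\0&\bar\alpha I_{n-k}\end{pmatrix}\begin{bmatrix}\Theta^\top\\(V^\perp)^\top\end{bmatrix},$$ with $\bar C=\bar\alpha I_k-\bar B$, $\bar\alpha=1+\frac p{\bar d}(1-2\eta)$, and $\bar B\in\mathbb R^{k\times k}$ given by $\bar B_{ii}=\frac{n_ip}{\bar d}(1-2\eta)$ and $\bar B_{ii'}=-\frac{\sqrt{n_in_{i'}}\,p}{\bar d}(1-2\eta)$ for $i\ne i'$.
   Context: SSBM: integers $n\ge2,k\ge2$, $p\in(0,1]$, $\eta\in[0,1/2)$, partition of $[n]$ into nonempty clusters $C_1,\dots,C_k$, $|C_i|=n_i$; edges present independently w.p. $p$, signed $+1$ within and $-1$ across clusters, signs flipped independently w.p. $\eta$. $A$ symmetric signed adjacency (zero diagonal), $\bar D=\mathrm{diag}(|A|\mathbf1)$ the signed degree matrix, $\bar d=p(n-1)$ so that $\mathbb E\bar D=\bar dI_n$. $\Theta_{ji}=1/\sqrt{n_i}$ if $j\in C_i$ else 0. $\mathcal L_{sym}=I-(\mathbb E\bar D)^{-1/2}\mathbb E[A](\mathbb E\bar D)^{-1/2}$. *)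

theory Defs
  imports "Jordan_Normal_Form.Matrix" "HOL-Probability.Probability_Mass_Function"
begin

(* Vertices are 0..<n, clusters are 0..<k; cl j is the cluster of vertex j. *)

definition clsize :: "nat \<Rightarrow> (nat \<Rightarrow> nat) \<Rightarrow> nat \<Rightarrow> nat" where
  "clsize n cl i = card {j. j < n \<and> cl j = i}"

definition ssbm_entry :: "real \<Rightarrow> real \<Rightarrow> (nat \<Rightarrow> nat) \<Rightarrow> nat \<Rightarrow> nat \<Rightarrow> real pmf" where
  "ssbm_entry p eta cl j l =
     do { e \<leftarrow> bernoulli_pmf p; f \<leftarrow> bernoulli_pmf eta;
          let s = (if cl j = cl l then 1 else -1 :: real);
          return_pmf (if e then (if f then - s else s) else 0) }"

definition expA :: "nat \<Rightarrow> real \<Rightarrow> real \<Rightarrow> (nat \<Rightarrow> nat) \<Rightarrow> real mat" where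
  "expA n p eta cl = Matrix.mat n n (\<lambda>(j,l). if j = l then 0
       else measure_pmf.expectation (ssbm_entry p eta cl j l) (\<lambda>x. x))"

definition expD :: "nat \<Rightarrow> real \<Rightarrow> real \<Rightarrow> (nat \<Rightarrow> nat) \<Rightarrow> real mat" where
  "expD n p eta cl = Matrix.mat n n (\<lambda>(j,l). if j = l then
       (\<Sum>m\<in>{0..<n} - {j}. measure_pmf.expectation (ssbm_entry p eta cl j m) (\<lambda>x. \<bar>x\<bar>))
     else 0)"

definition diag_inv_sqrt :: "real mat \<Rightarrow> real mat" where
  "diag_inv_sqrt D = Matrix.mat (dim_row D) (dim_col D)
      (\<lambda>(j,l). if j = l then 1 / sqrt (D $$ (j,j)) else 0)"

definition Lsym :: "nat \<Rightarrow> real \<Rightarrow> real \<Rightarrow> (nat \<Rightarrow> nat) \<Rightarrow> real mat" where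
  "Lsym n p eta cl = 1\<^sub>m n - diag_inv_sqrt (expD n p eta cl) * expA n p eta cl
                               * diag_inv_sqrt (expD n p eta cl)"

definition Theta :: "nat \<Rightarrow> nat \<Rightarrow> (nat \<Rightarrow> nat) \<Rightarrow> real mat" where
  "Theta n k cl = Matrix.mat n k (\<lambda>(j,i). if cl j = i then 1 / sqrt (real (clsize n cl i)) else 0)"

definition col_span :: "real mat \<Rightarrow> real Matrix.vec set" where
  "col_span M = {M *\<^sub>v y | y. y \<in> carrier_vec (dim_col M)}"

definition orth_compl :: "nat \<Rightarrow> real Matrix.vec set \<Rightarrow> real Matrix.vec set" where
  "orth_compl n S = {x \<in> carrier_vec n. \<forall>z \<in> S. scalar_prod z x = 0}"

definition orthonormal_basis_cols :: "real mat \<Rightarrow> real Matrix.vec set \<Rightarrow> bool" where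
  "orthonormal_basis_cols V W \<longleftrightarrow>
     (\<forall>i < dim_col V. \<forall>i' < dim_col V. scalar_prod (col V i) (col V i') = (if i = i' then 1 else 0))
     \<and> col_span V = W"

definition hcat :: "real mat \<Rightarrow> real mat \<Rightarrow> real mat" where
  "hcat A B = four_block_mat A B (0\<^sub>m 0 (dim_col A)) (0\<^sub>m 0 (dim_col B))"

end

theory Submission
  imports Defs "Jordan_Normal_Form.Determinant"
begin

(* Every off-diagonal entry of E[A] is p(1 - 2 eta) times the sign s(j,l) = +1/-1 of
   "j and l lie in the same cluster", and every expected degree is dbar = p(n - 1); hence
   L_sym = alpha I - c S with c = p(1 - 2 eta)/dbar and S = (s(j,l)) (diagonal included).
   The columns of Theta are orthonormal and V completes them to an orthonormal basis, so
   Theta Theta^T + V V^T = I and the right-hand side collapses to alpha I - Theta B Theta^T.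
   Conjugation by Theta divides the (i,i') entry of B by sqrt (n_i n_i'), which turns B into
   c S. *)

definition cluster_sign_mat :: "nat \<Rightarrow> (nat \<Rightarrow> nat) \<Rightarrow> real mat" where
  "cluster_sign_mat n cl = Matrix.mat n n (\<lambda>(j,l). if cl j = cl l then 1 else -1)"

lemma cluster_sign_mat_carrier [simp]: "cluster_sign_mat n cl \<in> carrier_mat n n"
  unfolding cluster_sign_mat_def by simp

lemma expectation_bernoulli_bind:
  fixes g :: "bool \<Rightarrow> 'a pmf" and h :: "'a \<Rightarrow> real"
  assumes "0 \<le> q" "q \<le> 1" "\<And>b. finite (set_pmf (g b))"
  shows "measure_pmf.expectation (bernoulli_pmf q \<bind> g) h
      = q * measure_pmf.expectation (g True) h + (1 - q) * measure_pmf.expectation (g False) h"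
  using assms by (subst pmf_expectation_bind[where A = UNIV]) (auto simp: UNIV_bool)

lemma expectation_ssbm_entry:
  fixes h :: "real \<Rightarrow> real"
  assumes "0 \<le> p" "p \<le> 1" "0 \<le> eta" "eta \<le> 1"
    and "s = (if cl j = cl l then 1 else -1)"
  shows "measure_pmf.expectation (ssbm_entry p eta cl j l) h
      = p * (eta * h (- s) + (1 - eta) * h s) + (1 - p) * h 0"
  unfolding ssbm_entry_def Let_def assms(5)[symmetric]
  using assms(1-4) by (simp add: expectation_bernoulli_bind set_bind_pmf algebra_simps)

lemma expectation_ssbm_entry_signed:
  assumes "0 \<le> p" "p \<le> 1" "0 \<le> eta" "eta \<le> 1"
  shows "measure_pmf.expectation (ssbm_entry p eta cl j l) (\<lambda>x. x)
      = p * (1 - 2 * eta) * (if cl j = cl l then 1 else -1)"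
  by (simp add: expectation_ssbm_entry[OF assms refl] algebra_simps)

lemma expectation_ssbm_entry_abs:
  assumes "0 \<le> p" "p \<le> 1" "0 \<le> eta" "eta \<le> 1"
  shows "measure_pmf.expectation (ssbm_entry p eta cl j l) abs = p"
  by (simp add: expectation_ssbm_entry[OF assms refl] algebra_simps)

lemma expD_ssbm:
  assumes "n \<ge> 1" "0 \<le> p" "p \<le> 1" "0 \<le> eta" "eta \<le> 1"
  shows "expD n p eta cl = (p * (real n - 1)) \<cdot>\<^sub>m 1\<^sub>m n"
proof (rule eq_matI)
  fix j l assume "j < dim_row ((p * (real n - 1)) \<cdot>\<^sub>m 1\<^sub>m n)"
    and "l < dim_col ((p * (real n - 1)) \<cdot>\<^sub>m 1\<^sub>m n)"
  then have "j < n" "l < n" by auto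
  moreover from \<open>j < n\<close> have "card ({0..<n} - {j}) = n - 1" by simp
  ultimately show "expD n p eta cl $$ (j, l) = ((p * (real n - 1)) \<cdot>\<^sub>m 1\<^sub>m n) $$ (j, l)"
    using assms by (simp add: expD_def expectation_ssbm_entry_abs of_nat_diff)
qed (simp_all add: expD_def)

lemma expA_ssbm:
  assumes "0 \<le> p" "p \<le> 1" "0 \<le> eta" "eta \<le> 1"
  shows "expA n p eta cl = (p * (1 - 2 * eta)) \<cdot>\<^sub>m (cluster_sign_mat n cl - 1\<^sub>m n)"
  by (rule eq_matI)
    (auto simp: expA_def cluster_sign_mat_def expectation_ssbm_entry_signed[OF assms])

lemma diag_inv_sqrt_smult_one_mat: "diag_inv_sqrt (d \<cdot>\<^sub>m 1\<^sub>m n) = (1 / sqrt d) \<cdot>\<^sub>m 1\<^sub>m n"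
  by (rule eq_matI) (auto simp: diag_inv_sqrt_def)

lemma smult_one_mat_sandwich:
  assumes "A \<in> carrier_mat n m"
  shows "(a \<cdot>\<^sub>m 1\<^sub>m n) * A * (b \<cdot>\<^sub>m 1\<^sub>m m) = (a * b) \<cdot>\<^sub>m (A :: 'a :: comm_ring_1 mat)"
  using assms
  by (simp add: mult_smult_assoc_mat[OF one_carrier_mat assms]
      mult_smult_distrib[OF smult_carrier_mat[OF assms] one_carrier_mat])
    (rule eq_matI, auto)

lemma Lsym_ssbm:
  assumes "n \<ge> 2" "0 < p" "p \<le> 1" "0 \<le> eta" "eta \<le> 1"
  defines "c \<equiv> p / (p * (real n - 1)) * (1 - 2 * eta)"
  shows "Lsym n p eta cl = (1 + c) \<cdot>\<^sub>m 1\<^sub>m n - c \<cdot>\<^sub>m cluster_sign_mat n cl"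
proof -
  let ?d = "p * (real n - 1)" and ?S = "cluster_sign_mat n cl"
  have "1 / sqrt ?d * (1 / sqrt ?d) = 1 / ?d"
    using assms(1,2) by (simp add: real_sqrt_mult[symmetric])
  moreover have "(p * (1 - 2 * eta)) \<cdot>\<^sub>m (?S - 1\<^sub>m n) \<in> carrier_mat n n"
    by (simp add: minus_carrier_mat)
  ultimately have "Lsym n p eta cl
      = 1\<^sub>m n - (1 / ?d) \<cdot>\<^sub>m ((p * (1 - 2 * eta)) \<cdot>\<^sub>m (?S - 1\<^sub>m n))"
    using assms(1-5)
    by (simp add: Lsym_def expD_ssbm expA_ssbm diag_inv_sqrt_smult_one_mat smult_one_mat_sandwich)
  then show ?thesis
    by (intro eq_matI) (auto simp: c_def cluster_sign_mat_def field_simps)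
qed

lemma clsize_pos: "i \<in> cl ` {..<n} \<Longrightarrow> clsize n cl i > 0"
  unfolding clsize_def by (auto simp: card_gt_0_iff)

lemma dim_Theta [simp]: "dim_row (Theta n k cl) = n" "dim_col (Theta n k cl) = k"
  unfolding Theta_def by simp_all

lemma Theta_carrier: "Theta n k cl \<in> carrier_mat n k"
  by (rule carrier_matI) simp_all

lemma Theta_index:
  "j < n \<Longrightarrow> i < k \<Longrightarrow>
    Theta n k cl $$ (j, i) = (if cl j = i then 1 / sqrt (real (clsize n cl i)) else 0)"
  unfolding Theta_def by simp

lemma Theta_mult_mult_transpose_index:
  assumes "X \<in> carrier_mat k k" "j < n" "l < n" "cl j < k" "cl l < k"
  shows "(Theta n k cl * X * transpose_mat (Theta n k cl)) $$ (j, l)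
    = X $$ (cl j, cl l) / (sqrt (real (clsize n cl (cl j))) * sqrt (real (clsize n cl (cl l))))"
proof -
  let ?T = "Theta n k cl" and ?r = "\<lambda>i. sqrt (real (clsize n cl i))"
  have row: "(?T * X) $$ (j, a) = X $$ (cl j, a) / ?r (cl j)" if "a < k" for a
  proof -
    have "(?T * X) $$ (j, a) = (\<Sum>i\<in>{0..<k}. ?T $$ (j, i) * X $$ (i, a))"
      using assms that by (simp add: scalar_prod_def)
    also have "\<dots> = (\<Sum>i\<in>{0..<k}. if cl j = i then X $$ (i, a) / ?r i else 0)"
      using assms by (intro sum.cong) (auto simp: Theta_index)
    also have "\<dots> = X $$ (cl j, a) / ?r (cl j)"
      using assms by simp
    finally show ?thesis .
  qed
  have "(?T * X * transpose_mat ?T) $$ (j, l) = (\<Sum>a\<in>{0..<k}. (?T * X) $$ (j, a) * ?T $$ (l, a))"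
    using assms by (simp add: scalar_prod_def)
  also have "\<dots> = (\<Sum>a\<in>{0..<k}. if cl l = a then X $$ (cl j, a) / ?r (cl j) / ?r a else 0)"
    using assms by (intro sum.cong) (auto simp: row Theta_index simp del: index_mult_mat)
  also have "\<dots> = X $$ (cl j, cl l) / (?r (cl j) * ?r (cl l))"
    using assms by simp
  finally show ?thesis .
qed

lemma transpose_Theta_mult_Theta:
  assumes "{..<k} \<subseteq> cl ` {..<n}"
  shows "transpose_mat (Theta n k cl) * Theta n k cl = 1\<^sub>m k"
proof (rule eq_matI)
  let ?T = "Theta n k cl"
  fix a b assume "a < dim_row (1\<^sub>m k :: real mat)" "b < dim_col (1\<^sub>m k :: real mat)"
  then have ab: "a < k" "b < k" by auto
  have "(transpose_mat ?T * ?T) $$ (a, b) = (\<Sum>j\<in>{0..<n}. ?T $$ (j, a) * ?T $$ (j, b))"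
    using ab by (simp add: scalar_prod_def)
  also have "\<dots> = (\<Sum>j\<in>{0..<n}. if cl j = a then (if a = b then 1 / real (clsize n cl a) else 0) else 0)"
    using ab by (intro sum.cong) (auto simp: Theta_index)
  also have "\<dots> = real (clsize n cl a) * (if a = b then 1 / real (clsize n cl a) else 0)"
    by (simp add: sum.If_cases clsize_def Int_def)
  also have "\<dots> = (1\<^sub>m k :: real mat) $$ (a, b)"
    using ab assms clsize_pos[of a cl n] by auto
  finally show "(transpose_mat ?T * ?T) $$ (a, b) = (1\<^sub>m k :: real mat) $$ (a, b)" .
qed auto

lemma Theta_mult_signed_size_mat_mult_transpose:
  assumes "cl ` {..<n} = {..<k}"
  shows "Theta n k cl
      * Matrix.mat k k (\<lambda>(i, i'). c * (if i = i' then real (clsize n cl i)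
          else - sqrt (real (clsize n cl i) * real (clsize n cl i'))))
      * transpose_mat (Theta n k cl)
    = c \<cdot>\<^sub>m cluster_sign_mat n cl"
proof (rule eq_matI)
  let ?X = "Matrix.mat k k (\<lambda>(i, i'). c * (if i = i' then real (clsize n cl i)
          else - sqrt (real (clsize n cl i) * real (clsize n cl i'))))"
  fix j l assume "j < dim_row (c \<cdot>\<^sub>m cluster_sign_mat n cl)"
    and "l < dim_col (c \<cdot>\<^sub>m cluster_sign_mat n cl)"
  then have jl: "j < n" "l < n"
    by (simp_all add: cluster_sign_mat_def)
  then have "cl j < k" "cl l < k" "clsize n cl (cl j) > 0" "clsize n cl (cl l) > 0"
    using assms clsize_pos[of _ cl n] by auto
  moreover from jl this(1,2) have "(Theta n k cl * ?X * transpose_mat (Theta n k cl)) $$ (j, l)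
      = ?X $$ (cl j, cl l) / (sqrt (real (clsize n cl (cl j))) * sqrt (real (clsize n cl (cl l))))"
    by (intro Theta_mult_mult_transpose_index) auto
  ultimately show "(Theta n k cl * ?X * transpose_mat (Theta n k cl)) $$ (j, l)
      = (c \<cdot>\<^sub>m cluster_sign_mat n cl) $$ (j, l)"
    using jl by (simp add: cluster_sign_mat_def real_sqrt_mult)
qed (simp_all add: cluster_sign_mat_def)

lemma col_mem_col_span: "i < dim_col A \<Longrightarrow> col A i \<in> col_span A"
  unfolding col_span_def
  by (intro CollectI exI[of _ "unit_vec (dim_col A) i"]) (auto intro: eq_vecI)

lemma orthonormal_basis_cols_transpose_mult_self:
  assumes "orthonormal_basis_cols V W"
  shows "transpose_mat V * V = 1\<^sub>m (dim_col V)"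
  using assms unfolding orthonormal_basis_cols_def by (intro eq_matI) auto

lemma transpose_mult_orthonormal_basis_of_orth_compl:
  assumes "A \<in> carrier_mat n k" "V \<in> carrier_mat n m"
    and "orthonormal_basis_cols V (orth_compl n (col_span A))"
  shows "transpose_mat A * V = 0\<^sub>m k m"
proof (rule eq_matI)
  fix a i assume "a < dim_row (0\<^sub>m k m :: real mat)" "i < dim_col (0\<^sub>m k m :: real mat)"
  then have "a < k" "i < m" by auto
  then have "col V i \<in> orth_compl n (col_span A)" "col A a \<in> col_span A"
    using assms col_mem_col_span[of i V] col_mem_col_span[of a A]
    unfolding orthonormal_basis_cols_def by auto
  then show "(transpose_mat A * V) $$ (a, i) = (0\<^sub>m k m :: real mat) $$ (a, i)"
    using \<open>a < k\<close> \<open>i < m\<close> assms(1,2) unfolding orth_compl_def by auto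
qed (use assms in auto)

lemma hcat_carrier:
  "A \<in> carrier_mat n k \<Longrightarrow> B \<in> carrier_mat n m \<Longrightarrow> hcat A B \<in> carrier_mat n (k + m)"
  unfolding hcat_def by auto

lemma hcat_mult_four_block_mat:
  assumes "A \<in> carrier_mat n k" "B \<in> carrier_mat n m"
    and "X \<in> carrier_mat k k'" "Y \<in> carrier_mat k m'" "Z \<in> carrier_mat m k'" "W \<in> carrier_mat m m'"
  shows "hcat A B * four_block_mat X Y Z W = hcat (A * X + B * Z) (A * Y + B * W)"
  using assms unfolding hcat_def
  by (subst mult_four_block_mat[of _ n k _ m _ 0]) auto

lemma hcat_mult_transpose_hcat:
  assumes "A \<in> carrier_mat n k" "B \<in> carrier_mat n m" "A' \<in> carrier_mat n' k" "B' \<in> carrier_mat n' m"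
  shows "hcat A B * transpose_mat (hcat A' B') = A * transpose_mat A' + B * transpose_mat B'"
proof -
  have "hcat A B * transpose_mat (hcat A' B')
      = four_block_mat A B (0\<^sub>m 0 k) (0\<^sub>m 0 m)
        * four_block_mat (transpose_mat A') (0\<^sub>m k 0) (transpose_mat B') (0\<^sub>m m 0)"
    using assms unfolding hcat_def by (subst transpose_four_block_mat) auto
  also have "\<dots> = four_block_mat (A * transpose_mat A' + B * transpose_mat B')
      (0\<^sub>m n 0) (0\<^sub>m 0 n') (0\<^sub>m 0 0)"
    using assms by (subst mult_four_block_mat[of _ n k _ m _ 0]) auto
  also have "\<dots> = A * transpose_mat A' + B * transpose_mat B'"
    using assms by (intro eq_matI) auto
  finally show ?thesis .
qed

lemma transpose_hcat_mult_hcat: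
  assumes "A \<in> carrier_mat n k" "B \<in> carrier_mat n m"
  shows "transpose_mat (hcat A B) * hcat A B
    = four_block_mat (transpose_mat A * A) (transpose_mat A * B) (transpose_mat B * A) (transpose_mat B * B)"
  using assms unfolding hcat_def
  by (subst transpose_four_block_mat, auto, subst mult_four_block_mat[of _ k n _ 0 _ m]) auto

lemma hcat_mult_block_diag_mult_transpose:
  assumes "A \<in> carrier_mat n k" "B \<in> carrier_mat n m" "X \<in> carrier_mat k k" "Y \<in> carrier_mat m m"
  shows "hcat A B * four_block_mat X (0\<^sub>m k m) (0\<^sub>m m k) Y * transpose_mat (hcat A B)
    = A * X * transpose_mat A + B * Y * transpose_mat B"
proof -
  have "hcat A B * four_block_mat X (0\<^sub>m k m) (0\<^sub>m m k) Y = hcat (A * X) (B * Y)"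
    using assms by (simp add: hcat_mult_four_block_mat[OF assms(1-3) _ _ assms(4)])
  then show ?thesis
    by (simp add: hcat_mult_transpose_hcat[OF mult_carrier_mat[OF assms(1,3)]
          mult_carrier_mat[OF assms(2,4)] assms(1,2)])
qed

lemma orthonormal_blocks_mult_transpose_add:
  fixes A B :: "real mat"
  assumes A: "A \<in> carrier_mat n k" and B: "B \<in> carrier_mat n m" and "k + m = n"
    and "transpose_mat A * A = 1\<^sub>m k" "transpose_mat B * B = 1\<^sub>m m" "transpose_mat A * B = 0\<^sub>m k m"
  shows "A * transpose_mat A + B * transpose_mat B = 1\<^sub>m n"
proof -
  let ?M = "hcat A B"
  have M: "?M \<in> carrier_mat n n"
    using hcat_carrier[OF A B] \<open>k + m = n\<close> by simp
  have "transpose_mat B * A = transpose_mat (transpose_mat A * B)"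
    using A B by (simp add: transpose_mult[of _ k n])
  also have "\<dots> = 0\<^sub>m m k"
    using assms(6) by simp
  finally have "transpose_mat ?M * ?M = four_block_mat (1\<^sub>m k) (0\<^sub>m k m) (0\<^sub>m m k) (1\<^sub>m m)"
    using assms(4-6) by (simp add: transpose_hcat_mult_hcat[OF A B])
  then have "transpose_mat ?M * ?M = 1\<^sub>m n"
    using \<open>k + m = n\<close> by simp
  then have "?M * transpose_mat ?M = 1\<^sub>m n"
    using M by (intro mat_mult_left_right_inverse[of "transpose_mat ?M"]) auto
  then show ?thesis
    by (simp add: hcat_mult_transpose_hcat[OF A B A B])
qed

lemma hcat_block_diag_shift_mult_transpose:
  fixes A B X :: "real mat"
  assumes A: "A \<in> carrier_mat n k" and B: "B \<in> carrier_mat n m" and X: "X \<in> carrier_mat k k"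
    and complete: "A * transpose_mat A + B * transpose_mat B = 1\<^sub>m n"
  shows "hcat A B * four_block_mat (a \<cdot>\<^sub>m 1\<^sub>m k - X) (0\<^sub>m k m) (0\<^sub>m m k) (a \<cdot>\<^sub>m 1\<^sub>m m)
      * transpose_mat (hcat A B)
    = a \<cdot>\<^sub>m 1\<^sub>m n - A * X * transpose_mat A"
proof -
  have AT: "transpose_mat A \<in> carrier_mat k n" and BT: "transpose_mat B \<in> carrier_mat m n"
    using A B by auto
  have "A * (a \<cdot>\<^sub>m 1\<^sub>m k - X) = a \<cdot>\<^sub>m A - A * X"
    using A by (simp add: mult_minus_distrib_mat[OF A _ X] mult_smult_distrib[OF A one_carrier_mat])
  then have "A * (a \<cdot>\<^sub>m 1\<^sub>m k - X) * transpose_mat A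
      = a \<cdot>\<^sub>m (A * transpose_mat A) - A * X * transpose_mat A"
    by (simp add: minus_mult_distrib_mat[OF smult_carrier_mat[OF A] mult_carrier_mat[OF A X] AT]
        mult_smult_assoc_mat[OF A AT])
  moreover have "B * (a \<cdot>\<^sub>m 1\<^sub>m m) * transpose_mat B = a \<cdot>\<^sub>m (B * transpose_mat B)"
    using B by (simp add: mult_smult_distrib[OF B one_carrier_mat] mult_smult_assoc_mat[OF B BT])
  ultimately have "hcat A B * four_block_mat (a \<cdot>\<^sub>m 1\<^sub>m k - X) (0\<^sub>m k m) (0\<^sub>m m k) (a \<cdot>\<^sub>m 1\<^sub>m m)
      * transpose_mat (hcat A B)
    = a \<cdot>\<^sub>m (A * transpose_mat A) - A * X * transpose_mat A + a \<cdot>\<^sub>m (B * transpose_mat B)"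
    using A B X by (simp add: hcat_mult_block_diag_mult_transpose minus_carrier_mat)
  also have "\<dots> = a \<cdot>\<^sub>m 1\<^sub>m n - A * X * transpose_mat A"
  proof (rule eq_matI)
    fix i j assume "i < dim_row (a \<cdot>\<^sub>m 1\<^sub>m n - A * X * transpose_mat A)"
      and "j < dim_col (a \<cdot>\<^sub>m 1\<^sub>m n - A * X * transpose_mat A)"
    then have ij: "i < n" "j < n" using A by auto
    then have "(A * transpose_mat A) $$ (i, j) + (B * transpose_mat B) $$ (i, j)
        = (1\<^sub>m n :: real mat) $$ (i, j)"
      using arg_cong[OF complete, of "\<lambda>M. M $$ (i, j)"] A B by simp
    then show "(a \<cdot>\<^sub>m (A * transpose_mat A) - A * X * transpose_mat A
        + a \<cdot>\<^sub>m (B * transpose_mat B)) $$ (i, j) = (a \<cdot>\<^sub>m 1\<^sub>m n - A * X * transpose_mat A) $$ (i, j)"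
      using ij A B X by (auto simp flip: distrib_left)
  qed (use A B in auto)
  finally show ?thesis .
qed

theorem mainTheorem16:
  fixes n k :: nat and p eta :: real and cl :: "nat \<Rightarrow> nat" and V :: "real mat"
  assumes "n \<ge> 2" and "k \<ge> 2"
    and "0 < p" and "p \<le> 1" and "0 \<le> eta" and "eta < 1/2"
    and "cl ` {..<n} = {..<k}"
    and "V \<in> carrier_mat n (n - k)"
    and "orthonormal_basis_cols V (orth_compl n (col_span (Theta n k cl)))"
  shows
    "let dbar = p * (real n - 1);
         alpha = 1 + p / dbar * (1 - 2 * eta);
         B = Matrix.mat k k (\<lambda>(i,i'). if i = i'
               then real (clsize n cl i) * p / dbar * (1 - 2 * eta)
               else - sqrt (real (clsize n cl i) * real (clsize n cl i')) * p / dbar * (1 - 2 * eta));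
         C = alpha \<cdot>\<^sub>m 1\<^sub>m k - B;
         M = hcat (Theta n k cl) V
     in Lsym n p eta cl
        = M * four_block_mat C (0\<^sub>m k (n - k)) (0\<^sub>m (n - k) k) (alpha \<cdot>\<^sub>m 1\<^sub>m (n - k))
            * transpose_mat M"
proof -
  define dbar where "dbar = p * (real n - 1)"
  define c where "c = p / dbar * (1 - 2 * eta)"
  define B where "B = Matrix.mat k k (\<lambda>(i,i'). if i = i'
      then real (clsize n cl i) * p / dbar * (1 - 2 * eta)
      else - sqrt (real (clsize n cl i) * real (clsize n cl i')) * p / dbar * (1 - 2 * eta))"
  let ?T = "Theta n k cl"
  have "k \<le> n"
    using card_image_le[of "{..<n}" cl] assms(7) by simp
  then have complete: "?T * transpose_mat ?T + V * transpose_mat V = 1\<^sub>m n"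
    using assms(7,8) Theta_carrier transpose_Theta_mult_Theta
      orthonormal_basis_cols_transpose_mult_self[OF assms(9)]
      transpose_mult_orthonormal_basis_of_orth_compl[OF Theta_carrier assms(8,9)]
    by (intro orthonormal_blocks_mult_transpose_add[of _ n k _ "n - k"]) auto
  have "B = Matrix.mat k k (\<lambda>(i, i'). c * (if i = i' then real (clsize n cl i)
      else - sqrt (real (clsize n cl i) * real (clsize n cl i'))))"
    unfolding B_def c_def by (intro eq_matI) auto
  then have "hcat ?T V * four_block_mat ((1 + c) \<cdot>\<^sub>m 1\<^sub>m k - B) (0\<^sub>m k (n - k)) (0\<^sub>m (n - k) k)
        ((1 + c) \<cdot>\<^sub>m 1\<^sub>m (n - k)) * transpose_mat (hcat ?T V)
      = (1 + c) \<cdot>\<^sub>m 1\<^sub>m n - c \<cdot>\<^sub>m cluster_sign_mat n cl"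
    using assms(7,8) complete
    by (simp add: hcat_block_diag_shift_mult_transpose[OF Theta_carrier]
        Theta_mult_signed_size_mat_mult_transpose)
  also have "\<dots> = Lsym n p eta cl"
    using assms(1,3-6) by (simp add: Lsym_ssbm c_def dbar_def)
  finally show ?thesis
    unfolding Let_def B_def c_def dbar_def by simp
qed

end
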